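(* In the induced continuum market $\widehat\Gamma$, let $M$ be a stable pseudo-matching, choose $f'\in F$, and let $M'$ be a pseudo-matching such that $M'_{f'}(w)=0$ whenever $M_{f'}(w)=0$ ($w\in W$), and $M'_f=M_f$ for all $f\ne f'$. Then in $M'$ there is no blocking coalition involving any firm $f\in F$ with $f\neq f'$; that is, there are no $f\in F\setminus\{f'\}$ and $M''\in[0,1]^W$ with $M''\succ_f M'_f$ and $M''\le A^{\preceq f}(M')$.
   Context: Finite firms $F$, finite workers $W=\{w_1,\dots,w_n\}$, null firm $\o$, $\widetilde F=F\cup\{\o\}$; each worker $w$ has a strict complete transitive preference $\succ_w$ over $\widetilde F$ ($f\succeq_w f'$ means $f\succ_w f'$ or $f=f'$); each firm $f\in F$ has a strict complete transitive preference $\succ_f$ over $2^W$, subsets identified with indicator vectors. For $f\in F$ list the sets $S\succ_f\emptyset$ as $\mathbf u^1\succ_f\cdots\succ_f\mathbf u^L$. For $\mathbf x\in[0,1]^W$: $t_0=0$, $\mathbf z^0=\mathbf x$, $t_k=\min\{1-\sum_{j<k}t_j,\ z^{k-1}_i: u^k_i\ne 0\}$, $\mathbf z^k=\mathbf z^{k-1}-t_k\mathbf u^k$, $\widehat{Ch}_f(\mathbf x)=\sum_{k=1}^L t_k\mathbf u^k$; $\widehat{Ch}_{\o}(\mathbf x)=\mathbf x$. A pseudo-matching is $M=(M_f)_{f\in\widetilde F}$ with $M_f\in[0,1]^W$. $\vee$ is componentwise max, $\le$ componentwise. $M''\succ_f M_f$ means $M''=\widehat{Ch}_f(M''\vee M_f)$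 and $M''\ne M_f$. $A^{\preceq f}(M)(w)=\sum_{f''\in\widetilde F:f\succeq_w f''}M_{f''}(w)$. A pseudo-matching $M$ is stable if (i) $M_f=\widehat{Ch}_f(M_f)$ for each $f\in F$ and $M_f(w)=0$ whenever $\o\succ_w f$; (ii) there are no $f\in F$, $M''\in[0,1]^W$ with $M''\succ_f M_f$ and $M''\le A^{\preceq f}(M)$. *)

theory Defs
  imports Complex_Main
begin

(* Conventions:
   - workers are the elements of a finite type 'w  (W = UNIV);
   - firms are the elements of a finite type 'f   (F = UNIV);
   - the extended firm set F~ = F \<union> {null} is  'f option, with None = null firm;
   - a pseudo-matching is  M :: 'f option \<Rightarrow> 'w \<Rightarrow> real;
   - a vector x \<in> [0,1]^W is a function  'w \<Rightarrow> real;
   - subsets of W are identified with their indicator vectors.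
   - pw w a b  means  a \<succ>_w b  (strict preference of worker w over F~);
   - pf f S T  means  S \<succ>_f T  (strict preference of firm f over 2^W). *)

definition strict_linear :: "('a \<Rightarrow> 'a \<Rightarrow> bool) \<Rightarrow> bool" where
  "strict_linear P \<longleftrightarrow> (\<forall>x. \<not> P x x) \<and> (\<forall>x y z. P x y \<longrightarrow> P y z \<longrightarrow> P x z)
      \<and> (\<forall>x y. x \<noteq> y \<longrightarrow> P x y \<or> P y x)"

definition unit_vec :: "('w \<Rightarrow> real) \<Rightarrow> bool" where
  "unit_vec x \<longleftrightarrow> (\<forall>w. 0 \<le> x w \<and> x w \<le> 1)"

definition acc_list :: "('f \<Rightarrow> 'w set \<Rightarrow> 'w set \<Rightarrow> bool) \<Rightarrow> 'f \<Rightarrow> 'w set list" where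
  "acc_list pf f = (SOME us. distinct us \<and> set us = {S. pf f S {}} \<and> sorted_wrt (pf f) us)"

(* greedy step: z = current z^{k-1}, r = 1 - \<Sum>_{j<k} t_j, remaining list u^k, ... *)
fun ch_aux :: "('w::finite \<Rightarrow> real) \<Rightarrow> real \<Rightarrow> 'w set list \<Rightarrow> ('w \<Rightarrow> real)" where
  "ch_aux z r [] = (\<lambda>w. 0)"
| "ch_aux z r (u # us) =
     (let t = Min (insert r (z ` u)) in
       (\<lambda>w. (if w \<in> u then t else 0) + ch_aux (\<lambda>v. z v - (if v \<in> u then t else 0)) (r - t) us w))"

definition Ch :: "('f \<Rightarrow> 'w set \<Rightarrow> 'w set \<Rightarrow> bool) \<Rightarrow> 'f \<Rightarrow> ('w::finite \<Rightarrow> real) \<Rightarrow> ('w \<Rightarrow> real)" where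
  "Ch pf f x = ch_aux x 1 (acc_list pf f)"

definition firm_prefers ::
  "('f \<Rightarrow> 'w set \<Rightarrow> 'w set \<Rightarrow> bool) \<Rightarrow> 'f \<Rightarrow> ('w::finite \<Rightarrow> real) \<Rightarrow> ('w \<Rightarrow> real) \<Rightarrow> bool" where
  "firm_prefers pf f M'' Mf \<longleftrightarrow> M'' = Ch pf f (\<lambda>w. max (M'' w) (Mf w)) \<and> M'' \<noteq> Mf"

definition avail ::
  "('w \<Rightarrow> 'f option \<Rightarrow> 'f option \<Rightarrow> bool) \<Rightarrow> ('f::finite option \<Rightarrow> 'w \<Rightarrow> real) \<Rightarrow> 'f option \<Rightarrow> 'w \<Rightarrow> real" where
  "avail pw M f w = (\<Sum>g \<in> {g. pw w f g \<or> f = g}. M g w)"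

definition pseudo_matching :: "('f option \<Rightarrow> 'w \<Rightarrow> real) \<Rightarrow> bool" where
  "pseudo_matching M \<longleftrightarrow> (\<forall>g. unit_vec (M g))"

definition blocks ::
  "('w \<Rightarrow> 'f option \<Rightarrow> 'f option \<Rightarrow> bool) \<Rightarrow> ('f \<Rightarrow> 'w set \<Rightarrow> 'w set \<Rightarrow> bool)
     \<Rightarrow> ('f::finite option \<Rightarrow> 'w::finite \<Rightarrow> real) \<Rightarrow> 'f \<Rightarrow> ('w \<Rightarrow> real) \<Rightarrow> bool" where
  "blocks pw pf M f M'' \<longleftrightarrow> unit_vec M'' \<and> firm_prefers pf f M'' (M (Some f))
       \<and> (\<forall>w. M'' w \<le> avail pw M (Some f) w)"

definition stable ::
  "('w \<Rightarrow> 'f option \<Rightarrow> 'f option \<Rightarrow> bool) \<Rightarrow> ('f \<Rightarrow> 'w set \<Rightarrow> 'w set \<Rightarrow> bool)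
     \<Rightarrow> ('f::finite option \<Rightarrow> 'w::finite \<Rightarrow> real) \<Rightarrow> bool" where
  "stable pw pf M \<longleftrightarrow>
     (\<forall>f. M (Some f) = Ch pf f (M (Some f)))
   \<and> (\<forall>f w. pw w None (Some f) \<longrightarrow> M (Some f) w = 0)
   \<and> \<not> (\<exists>f M''. blocks pw pf M f M'')"

end

(*
  Suppose b blocks M' at a firm f other than f', and put m = M_f = M'_f and a = A^{<=f}(M).
  M' can offer f more than M only at workers w that f' already employs under M and that rank
  f' below f; there M itself leaves f slack, m(w) < a(w). So for small e > 0 the mixture
  (1 - e) m + e b lies below a.
  Ch_f chooses the lexicographically largest feasible weight vector (t_1, ..., t_L) of its
  greedy procedure. Mixing the weight vectors of m and b in the same proportion yields
  feasible weights for the mixture that are lexicographically above those of m, so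
  N = Ch_f (max ((1 - e) m + e b) m) differs from m. Since Ch_f returns N again from every
  capacity between N and its argument, N is preferred to m, and N <= a: N blocks M.
*)
theory Submission
  imports Defs "HOL-Library.List_Lexorder"
begin

fun greedy_weights :: "('w::finite \<Rightarrow> real) \<Rightarrow> real \<Rightarrow> 'w set list \<Rightarrow> real list" where
  "greedy_weights z r [] = []"
| "greedy_weights z r (u # us) =
     (let t = Min (insert r (z ` u))
      in t # greedy_weights (\<lambda>v. z v - (if v \<in> u then t else 0)) (r - t) us)"

definition indicator_sum :: "'w set list \<Rightarrow> real list \<Rightarrow> 'w \<Rightarrow> real" where
  "indicator_sum us ts w = (\<Sum>(u, t)\<leftarrow>zip us ts. if w \<in> u then t else 0)"

definition feasible_weights :: "('w \<Rightarrow> real) \<Rightarrow> real \<Rightarrow> 'w set list \<Rightarrow> real list \<Rightarrow> bool" where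
  "feasible_weights z r us ts \<longleftrightarrow> length ts = length us \<and> (\<forall>t\<in>set ts. 0 \<le> t)
     \<and> sum_list ts \<le> r \<and> (\<forall>w. indicator_sum us ts w \<le> z w)"

lemma indicator_sum_Nil [simp]: "indicator_sum [] ts w = 0"
  by (simp add: indicator_sum_def)

lemma indicator_sum_Cons [simp]:
  "indicator_sum (u # us) (t # ts) w = (if w \<in> u then t else 0) + indicator_sum us ts w"
  by (simp add: indicator_sum_def)

lemma ch_aux_eq_indicator_sum: "ch_aux z r us = indicator_sum us (greedy_weights z r us)"
  by (induction us arbitrary: z r) (auto simp: Let_def)

lemma indicator_sum_nonneg: "\<forall>t\<in>set ts. 0 \<le> t \<Longrightarrow> 0 \<le> indicator_sum us ts w"
  unfolding indicator_sum_def by (rule sum_list_nonneg) (auto dest: set_zip_rightD)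

lemma feasible_weights_Nil [simp]:
  "feasible_weights z r [] ts \<longleftrightarrow> ts = [] \<and> 0 \<le> r \<and> (\<forall>w. 0 \<le> z w)"
  by (auto simp: feasible_weights_def)

lemma feasible_weights_Cons [simp]:
  "feasible_weights z r (u # us) (t # ts) \<longleftrightarrow>
     0 \<le> t \<and> feasible_weights (\<lambda>v. z v - (if v \<in> u then t else 0)) (r - t) us ts"
  by (auto simp: feasible_weights_def algebra_simps)

lemma feasible_weights_nonneg:
  assumes "feasible_weights z r us ts"
  shows "0 \<le> r" and "0 \<le> z w"
proof -
  have ts: "\<forall>t\<in>set ts. 0 \<le> t"
    using assms by (simp add: feasible_weights_def)
  show "0 \<le> r"
    using assms sum_list_nonneg[of ts] ts by (auto simp: feasible_weights_def)
  show "0 \<le> z w"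
    using assms indicator_sum_nonneg[OF ts, of us w]
    by (auto simp: feasible_weights_def intro: order_trans)
qed

lemma feasible_weights_mono:
  "feasible_weights z r us ts \<Longrightarrow> (\<And>w. z w \<le> z' w) \<Longrightarrow> feasible_weights z' r us ts"
  unfolding feasible_weights_def by (meson order_trans)

lemma feasible_weights_indicator_sum:
  "feasible_weights z r us ts \<Longrightarrow> feasible_weights (indicator_sum us ts) r us ts"
  unfolding feasible_weights_def by simp

lemma greedy_weights_feasible:
  "(\<And>w. 0 \<le> z w) \<Longrightarrow> 0 \<le> r \<Longrightarrow> feasible_weights z r us (greedy_weights z r us)"
proof (induction us arbitrary: z r)
  case Nil
  then show ?case by simp
next
  case (Cons u us)
  define t where "t = Min (insert r (z ` u))"
  define z' where "z' = (\<lambda>v. z v - (if v \<in> u then t else 0))"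
  have "0 \<le> t" "t \<le> r" "\<And>v. v \<in> u \<Longrightarrow> t \<le> z v"
    using Cons.prems by (auto simp: t_def)
  then have "\<And>v. 0 \<le> z' v" and "0 \<le> r - t"
    using Cons.prems by (auto simp: z'_def)
  then have "feasible_weights z' (r - t) us (greedy_weights z' (r - t) us)"
    by (rule Cons.IH)
  with \<open>0 \<le> t\<close> show ?case
    unfolding z'_def t_def by (simp add: Let_def)
qed

lemma greedy_weights_lex_max:
  "feasible_weights z r us ts \<Longrightarrow> ts \<le> greedy_weights z r us"
proof (induction us arbitrary: z r ts)
  case Nil
  then show ?case by simp
next
  case (Cons u us)
  then obtain s ss where ts: "ts = s # ss"
    by (cases ts) (auto simp: feasible_weights_def)
  define t where "t = Min (insert r (z ` u))"
  define z' where "z' = (\<lambda>v. z v - (if v \<in> u then t else 0))"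
  have greedy: "greedy_weights z r (u # us) = t # greedy_weights z' (r - t) us"
    unfolding z'_def t_def by (simp add: Let_def)
  have rest: "feasible_weights (\<lambda>v. z v - (if v \<in> u then s else 0)) (r - s) us ss"
    using Cons.prems ts by simp
  have "s \<le> r" "\<And>v. v \<in> u \<Longrightarrow> s \<le> z v"
    using feasible_weights_nonneg[OF rest] by (fastforce split: if_splits)+
  then have "s \<le> t"
    by (simp add: t_def)
  moreover have "ss \<le> greedy_weights z' (r - t) us" if "s = t"
    unfolding z'_def using Cons.IH[OF rest[unfolded that]] .
  ultimately show ?case
    unfolding ts greedy by auto
qed

lemma greedy_weights_mono:
  assumes "\<And>w. 0 \<le> z w" "0 \<le> r" "\<And>w. z w \<le> z' w"
  shows "greedy_weights z r us \<le> greedy_weights z' r us"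
  using feasible_weights_mono[OF greedy_weights_feasible[OF assms(1,2)] assms(3)]
  by (rule greedy_weights_lex_max)

lemma ch_aux_bounds:
  assumes "\<And>w. 0 \<le> z w" "0 \<le> r"
  shows "0 \<le> ch_aux z r us w" and "ch_aux z r us w \<le> z w"
  using greedy_weights_feasible[of z r us] assms
  by (auto simp: ch_aux_eq_indicator_sum feasible_weights_def intro: indicator_sum_nonneg)

lemma ch_aux_eq_if_between:
  assumes "\<And>w. 0 \<le> z w" "0 \<le> r"
    and "\<And>w. ch_aux x r us w \<le> z w" "\<And>w. z w \<le> x w"
  shows "ch_aux z r us = ch_aux x r us"
proof -
  have "feasible_weights (ch_aux x r us) r us (greedy_weights x r us)"
    using greedy_weights_feasible[of x r us] assms(1,2,4)
    by (auto simp: ch_aux_eq_indicator_sum intro: feasible_weights_indicator_sum order_trans)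
  then have "greedy_weights x r us \<le> greedy_weights z r us"
    using assms(3) by (blast intro: greedy_weights_lex_max feasible_weights_mono)
  moreover have "greedy_weights z r us \<le> greedy_weights x r us"
    using assms(1,2,4) by (rule greedy_weights_mono)
  ultimately show ?thesis
    by (simp add: ch_aux_eq_indicator_sum)
qed

lemma feasible_weights_convex:
  assumes "feasible_weights z1 r1 us a" "feasible_weights z2 r2 us b" "0 \<le> e" "e \<le> 1"
  shows "feasible_weights (\<lambda>w. (1 - e) * z1 w + e * z2 w) ((1 - e) * r1 + e * r2) us
           (map2 (\<lambda>x y. (1 - e) * x + e * y) a b)"
  using assms(1,2)
proof (induction us arbitrary: z1 z2 r1 r2 a b)
  case Nil
  then show ?case using assms(3,4) by simp
next
  case (Cons u us)
  then obtain s ss t tt where ab: "a = s # ss" "b = t # tt"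
    by (cases a; cases b) (auto simp: feasible_weights_def)
  have "feasible_weights
      (\<lambda>w. (1 - e) * (z1 w - (if w \<in> u then s else 0)) + e * (z2 w - (if w \<in> u then t else 0)))
      ((1 - e) * (r1 - s) + e * (r2 - t)) us (map2 (\<lambda>x y. (1 - e) * x + e * y) ss tt)"
    using Cons.prems ab by (intro Cons.IH) auto
  moreover have "0 \<le> (1 - e) * s + e * t"
    using Cons.prems ab assms(3,4) by simp
  ultimately show ?case
    unfolding ab by (simp add: algebra_simps if_distrib cong: if_cong)
qed

lemma less_map2_convex:
  fixes a b :: "real list"
  assumes "length a = length b" "a < b" "0 < e"
  shows "a < map2 (\<lambda>x y. (1 - e) * x + e * y) a b"
  using assms
proof (induction a b rule: list_induct2)
  case Nil
  then show ?case by simp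
next
  case (Cons x xs y ys)
  show ?case
  proof (cases "x < y")
    case True
    then have "x < (1 - e) * x + e * y"
      using \<open>0 < e\<close> by (simp add: algebra_simps)
    then show ?thesis by simp
  next
    case False
    then show ?thesis using Cons by (simp add: algebra_simps)
  qed
qed

lemma ch_aux_above_convex_comb_ne:
  assumes m_nonneg: "\<And>w. 0 \<le> m w" and r_nonneg: "0 \<le> r"
    and m_chosen: "ch_aux m r us = m"
    and b_chosen: "ch_aux (\<lambda>w. max (b w) (m w)) r us = b" and "b \<noteq> m"
    and "0 < e" "e \<le> 1"
    and above: "\<And>w. (1 - e) * m w + e * b w \<le> x w"
  shows "ch_aux x r us \<noteq> m"
proof
  assume x_chosen: "ch_aux x r us = m"
  define T where "T = greedy_weights m r us"
  define T' where "T' = greedy_weights (\<lambda>w. max (b w) (m w)) r us"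
  define Y where "Y = map2 (\<lambda>x y. (1 - e) * x + e * y) T T'"
  have T_feasible: "feasible_weights m r us T"
    unfolding T_def using m_nonneg r_nonneg by (rule greedy_weights_feasible)
  have "feasible_weights (\<lambda>w. max (b w) (m w)) r us T'"
    unfolding T'_def using m_nonneg r_nonneg
    by (intro greedy_weights_feasible) (simp add: max.coboundedI2)
  then have T'_feasible: "feasible_weights b r us T'"
    using feasible_weights_indicator_sum b_chosen by (metis T'_def ch_aux_eq_indicator_sum)
  have "T \<le> T'"
    unfolding T_def T'_def using m_nonneg r_nonneg by (rule greedy_weights_mono) simp
  moreover have "T \<noteq> T'"
    using m_chosen b_chosen \<open>b \<noteq> m\<close> by (metis T_def T'_def ch_aux_eq_indicator_sum)
  moreover have "length T = length T'"
    using T_feasible T'_feasible by (simp add: feasible_weights_def)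
  ultimately have "T < Y"
    unfolding Y_def using \<open>0 < e\<close> by (intro less_map2_convex) auto
  have "feasible_weights (\<lambda>w. (1 - e) * m w + e * b w) ((1 - e) * r + e * r) us Y"
    unfolding Y_def using T_feasible T'_feasible \<open>0 < e\<close> \<open>e \<le> 1\<close>
    by (intro feasible_weights_convex) auto
  then have Y_feasible: "feasible_weights x r us Y"
    using above by (auto simp: algebra_simps intro: feasible_weights_mono)
  then have "Y \<le> greedy_weights x r us"
    by (rule greedy_weights_lex_max)
  moreover have "greedy_weights x r us \<le> T"
  proof -
    have "feasible_weights x r us (greedy_weights x r us)"
      using feasible_weights_nonneg[OF Y_feasible] by (intro greedy_weights_feasible)
    then have "feasible_weights m r us (greedy_weights x r us)"
      using feasible_weights_indicator_sum x_chosen by (metis ch_aux_eq_indicator_sum)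
    then show ?thesis
      unfolding T_def by (rule greedy_weights_lex_max)
  qed
  ultimately show False
    using \<open>T < Y\<close> by simp
qed

lemma exists_convex_comb_below:
  fixes m b a :: "'w::finite \<Rightarrow> real"
  assumes "\<And>w. m w \<le> a w" and "\<And>w. b w \<le> a w \<or> m w < a w"
  shows "\<exists>e. 0 < e \<and> e \<le> 1 \<and> (\<forall>w. (1 - e) * m w + e * b w \<le> a w)"
proof -
  have unit: "\<forall>\<^sub>F e in at_right 0. e \<in> {0::real<..<1}"
    by (rule eventually_at_right_real) simp
  have "\<forall>\<^sub>F e in at_right 0. (1 - e) * m w + e * b w \<le> a w" for w
  proof (cases "b w \<le> a w")
    case True
    have "(1 - e) * m w + e * b w \<le> (1 - e) * a w + e * a w" if "e \<in> {0<..<1}" for e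
      using that True assms(1)[of w] by (intro add_mono mult_left_mono) auto
    then show ?thesis
      using unit by (auto elim: eventually_mono simp: algebra_simps)
  next
    case False
    then have "m w < a w"
      using assms(2) by blast
    have "((\<lambda>e. (1 - e) * m w + e * b w) \<longlongrightarrow> (1 - 0) * m w + 0 * b w) (at_right 0)"
      by (intro tendsto_intros)
    then show ?thesis
      using order_tendstoD(2) \<open>m w < a w\<close> by (fastforce elim: eventually_mono)
  qed
  then have "\<forall>\<^sub>F e in at_right 0. e \<in> {0<..<1} \<and> (\<forall>w. (1 - e) * m w + e * b w \<le> a w)"
    using unit by (intro eventually_conj eventually_all_finite)
  then obtain e where "e \<in> {0<..<1}" "\<forall>w. (1 - e) * m w + e * b w \<le> a w"
    using eventually_happens'[OF trivial_limit_at_right_real] by blast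
  then show ?thesis
    by (intro exI[of _ e]) auto
qed

lemma avail_ge_self:
  assumes "pseudo_matching M"
  shows "M g w \<le> avail pw M g w"
proof -
  have "M g w = (\<Sum>g'\<in>{g}. M g' w)"
    by simp
  also have "\<dots> \<le> avail pw M g w"
    unfolding avail_def using assms
    by (intro sum_mono2) (auto simp: pseudo_matching_def unit_vec_def)
  finally show ?thesis .
qed

lemma avail_after_reassignment:
  assumes "pseudo_matching M"
    and shrink: "\<forall>w. M (Some f') w = 0 \<longrightarrow> M' (Some f') w = 0"
    and others: "\<forall>g. g \<noteq> Some f' \<longrightarrow> M' g = M g"
    and "f \<noteq> f'"
  shows "avail pw M' (Some f) w \<le> avail pw M (Some f) w \<or> M (Some f) w < avail pw M (Some f) w"
proof (cases "pw w (Some f) (Some f') \<and> M (Some f') w < M' (Some f') w")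
  case no_gain: False
  have "avail pw M' (Some f) w \<le> avail pw M (Some f) w"
    unfolding avail_def
  proof (rule sum_mono)
    fix g
    assume "g \<in> {g. pw w (Some f) g \<or> Some f = g}"
    then show "M' g w \<le> M g w"
    proof (cases "g = Some f'")
      case True
      then have "pw w (Some f) (Some f')"
        using \<open>g \<in> _\<close> \<open>f \<noteq> f'\<close> by auto
      then show ?thesis
        using no_gain True by (simp add: not_less)
    next
      case False
      then show ?thesis
        using others by simp
    qed
  qed
  then show ?thesis ..
next
  case True
  have "0 \<le> M (Some f') w"
    using assms(1) by (simp add: pseudo_matching_def unit_vec_def)
  moreover have "M (Some f') w \<noteq> 0"
    using True shrink by auto
  moreover have "M (Some f) w + M (Some f') w \<le> avail pw M (Some f) w"
  proof -
    have "(\<Sum>g\<in>{Some f, Some f'}. M g w) \<le> avail pw M (Some f) w"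
      unfolding avail_def using True assms(1)
      by (intro sum_mono2) (auto simp: pseudo_matching_def unit_vec_def)
    then show ?thesis
      using \<open>f \<noteq> f'\<close> by simp
  qed
  ultimately show ?thesis
    by linarith
qed

lemma exists_firm_prefers_below:
  assumes m_unit: "unit_vec m" and m_chosen: "Ch pf f m = m"
    and b_unit: "unit_vec b" and "firm_prefers pf f b m"
    and "\<And>w. m w \<le> a w" and "\<And>w. b w \<le> a w \<or> m w < a w"
  shows "\<exists>N. unit_vec N \<and> firm_prefers pf f N m \<and> (\<forall>w. N w \<le> a w)"
proof -
  obtain e where "0 < e" "e \<le> 1" and below: "\<forall>w. (1 - e) * m w + e * b w \<le> a w"
    using exists_convex_comb_below assms(5,6) by blast
  define x where "x w = max ((1 - e) * m w + e * b w) (m w)" for w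
  define N where "N = Ch pf f x"
  have m_bounds: "0 \<le> m w" "m w \<le> 1" and b_bounds: "0 \<le> b w" "b w \<le> 1" for w
    using m_unit b_unit by (auto simp: unit_vec_def)
  have "(1 - e) * m w + e * b w \<le> (1 - e) * 1 + e * 1" for w
    using m_bounds b_bounds \<open>e \<le> 1\<close> \<open>0 < e\<close> by (intro add_mono mult_left_mono) auto
  then have x_bounds: "m w \<le> x w" "x w \<le> 1" "x w \<le> a w" for w
    using m_bounds below assms(5) by (auto simp: x_def)
  have x_nonneg: "0 \<le> x w" for w
    using m_bounds x_bounds by (meson order_trans)
  have N_bounds: "0 \<le> N w" "N w \<le> x w" for w
    unfolding N_def Ch_def using x_nonneg by (auto intro: ch_aux_bounds)
  have "0 \<le> max (N w) (m w)" "N w \<le> max (N w) (m w)" "max (N w) (m w) \<le> x w" for w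
    using m_bounds(1)[of w] N_bounds(2)[of w] x_bounds(1)[of w] by simp_all
  then have "Ch pf f (\<lambda>w. max (N w) (m w)) = N"
    unfolding N_def Ch_def by (rule ch_aux_eq_if_between[OF _ zero_le_one])
  moreover have "N \<noteq> m"
  proof -
    have "ch_aux m 1 (acc_list pf f) = m"
      using m_chosen by (simp add: Ch_def)
    moreover have "ch_aux (\<lambda>w. max (b w) (m w)) 1 (acc_list pf f) = b" and "b \<noteq> m"
      using \<open>firm_prefers pf f b m\<close> by (simp_all add: firm_prefers_def Ch_def)
    moreover have "(1 - e) * m w + e * b w \<le> x w" for w
      by (simp add: x_def)
    ultimately show ?thesis
      unfolding N_def Ch_def
      using m_bounds \<open>0 < e\<close> \<open>e \<le> 1\<close> by (intro ch_aux_above_convex_comb_ne[where b = b]) auto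
  qed
  ultimately have "firm_prefers pf f N m"
    by (simp add: firm_prefers_def)
  moreover have "N w \<le> 1" "N w \<le> a w" for w
    using N_bounds(2)[of w] x_bounds(2,3)[of w] by linarith+
  then have "unit_vec N" and "\<forall>w. N w \<le> a w"
    using N_bounds(1) by (simp_all add: unit_vec_def)
  ultimately show ?thesis
    by blast
qed

theorem lemma5:
  fixes pw :: "'w::finite \<Rightarrow> 'f::finite option \<Rightarrow> 'f option \<Rightarrow> bool"
    and pf :: "'f \<Rightarrow> 'w set \<Rightarrow> 'w set \<Rightarrow> bool"
    and M M' :: "'f option \<Rightarrow> 'w \<Rightarrow> real"
    and f' :: 'f
  assumes "\<forall>w. strict_linear (pw w)"
    and "\<forall>f. strict_linear (pf f)"
    and "pseudo_matching M"
    and "stable pw pf M"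
    and "pseudo_matching M'"
    and "\<forall>w. M (Some f') w = 0 \<longrightarrow> M' (Some f') w = 0"
    and "\<forall>g. g \<noteq> Some f' \<longrightarrow> M' g = M g"
  shows "\<not> (\<exists>f M''. f \<noteq> f' \<and> blocks pw pf M' f M'')"
proof
  assume "\<exists>f M''. f \<noteq> f' \<and> blocks pw pf M' f M''"
  then obtain f b where "f \<noteq> f'" and "blocks pw pf M' f b"
    by blast
  then have b_unit: "unit_vec b" and b_preferred: "firm_prefers pf f b (M (Some f))"
    and b_avail: "\<forall>w. b w \<le> avail pw M' (Some f) w"
    using assms(7) by (auto simp: blocks_def)
  have m_unit: "unit_vec (M (Some f))"
    using assms(3) by (simp add: pseudo_matching_def)
  have m_chosen: "Ch pf f (M (Some f)) = M (Some f)"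
    using assms(4) by (simp add: stable_def)
  have slack: "b w \<le> avail pw M (Some f) w \<or> M (Some f) w < avail pw M (Some f) w" for w
    using avail_after_reassignment[OF assms(3,6,7) \<open>f \<noteq> f'\<close>, of pw w] b_avail
    by (meson order_trans)
  obtain N where "unit_vec N" "firm_prefers pf f N (M (Some f))"
    and "\<forall>w. N w \<le> avail pw M (Some f) w"
    using exists_firm_prefers_below[OF m_unit m_chosen b_unit b_preferred avail_ge_self[OF assms(3)] slack]
    by blast
  then have "blocks pw pf M f N"
    by (simp add: blocks_def)
  then show False
    using assms(4) by (simp add: stable_def)
qed

end
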